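(* Let $\tau\in(3,5)$, $c_w>0$, and $w_i=c_w(N/i)^{1/(\tau-1)}$ for $i\in[N]$. Take $\beta=\beta_{c,N}={\rm asinh}(1/\nu_N)$ and $\lambda=(\tau-2)/(\tau-1)$ in the definition of $G_N$. Then for every $z,r\in\mathbb R$, \[ \lim_{N\to\infty}N\,G_N(z/N^{1/(\tau-1)};r)=-zr\sqrt{\frac{\mathbb E[W]}{\nu}}+f\Big(\sqrt{\frac{\mathbb E[W]}{\nu}}\,z\Big), \] where $f(x)=\sum_{i\ge1}\Big(\frac12\big(\frac{\tau-2}{\tau-1}x\,i^{-1/(\tau-1)}\big)^2-\log\cosh\big(\frac{\tau-2}{\tau-1}x\,i^{-1/(\tau-1)}\big)\Big)$.
   Context: $W_N=w_{U_N}$ with $U_N$ uniform on $[N]$; for these weights $W_N$ converges in distribution to $W$ with $\mathbb P(W>w)=(w/c_w)^{-(\tau-1)}$ for $w\ge c_w$, and $\mathbb E[W_N]\to\mathbb E[W]=c_w\frac{\tau-1}{\tau-2}$, $\mathbb E[W_N^2]\to\mathbb E[W^2]<\infty$. $\nu=\mathbb E[W^2]/\mathbb E[W]$, $\nu_N=\mathbb E[W_N^2]/\mathbb E[W_N]$, $\alpha_N(\beta)=\sqrt{\sinh(\beta)/\mathbb E[W_N]}$, and $G_N(z;r)=\frac12z^2-\frac1N\sum_{i\in[N]}\log\cosh\big(\alpha_N(\beta)w_iz+r/N^\lambda\big)$. *)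

theory Defs
  imports "HOL-Analysis.Analysis"
begin

definition wt :: "real \<Rightarrow> real \<Rightarrow> nat \<Rightarrow> nat \<Rightarrow> real" where
  "wt tau cw N i = cw * (real N / real i) powr (1 / (tau - 1))"

text \<open>E[W_N] and E[W_N^2] for W_N = w_{U_N}, U_N uniform on [N].\<close>
definition EWN :: "real \<Rightarrow> real \<Rightarrow> nat \<Rightarrow> real" where
  "EWN tau cw N = (\<Sum>i=1..N. wt tau cw N i) / real N"

definition EWN2 :: "real \<Rightarrow> real \<Rightarrow> nat \<Rightarrow> real" where
  "EWN2 tau cw N = (\<Sum>i=1..N. (wt tau cw N i)^2) / real N"

definition nuN :: "real \<Rightarrow> real \<Rightarrow> nat \<Rightarrow> real" where
  "nuN tau cw N = EWN2 tau cw N / EWN tau cw N"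

text \<open>Limit law W: P(W > w) = (w/c_w)^(-(tau-1)) for w >= c_w, i.e. the Pareto density
  (tau-1) c_w^(tau-1) w^(-tau) on [c_w, infinity).\<close>
definition pareto_dens :: "real \<Rightarrow> real \<Rightarrow> real \<Rightarrow> real" where
  "pareto_dens tau cw w = (tau - 1) * cw powr (tau - 1) * w powr (- tau)"

definition EW :: "real \<Rightarrow> real \<Rightarrow> real" where
  "EW tau cw = (\<integral>w\<in>{cw..}. w * pareto_dens tau cw w \<partial>lborel)"

definition EW2 :: "real \<Rightarrow> real \<Rightarrow> real" where
  "EW2 tau cw = (\<integral>w\<in>{cw..}. w^2 * pareto_dens tau cw w \<partial>lborel)"

definition nu :: "real \<Rightarrow> real \<Rightarrow> real" where
  "nu tau cw = EW2 tau cw / EW tau cw"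

definition alphaN :: "real \<Rightarrow> real \<Rightarrow> nat \<Rightarrow> real \<Rightarrow> real" where
  "alphaN tau cw N beta = sqrt (sinh beta / EWN tau cw N)"

definition GN :: "real \<Rightarrow> real \<Rightarrow> nat \<Rightarrow> real \<Rightarrow> real \<Rightarrow> real \<Rightarrow> real \<Rightarrow> real" where
  "GN tau cw N beta lam z r =
     z^2 / 2 - (\<Sum>i=1..N. ln (cosh (alphaN tau cw N beta * wt tau cw N i * z + r / real N powr lam))) / real N"

definition ff :: "real \<Rightarrow> real \<Rightarrow> real" where
  "ff tau x = (\<Sum>i. let y = (tau - 2) / (tau - 1) * x * real (Suc i) powr (- 1 / (tau - 1))
                    in y^2 / 2 - ln (cosh y))"

end

theory Submission
  imports Defs "HOL-Real_Asymp.Real_Asymp"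
begin

text \<open>
  Put g = 1/(tau - 1), which lies in (1/4, 1/2), so that w_i = c_w N^g i^-g. At the critical
  beta one has alpha_N = E[W_N^2]^(-1/2), and after the rescaling z -> z/N^g the i-th argument
  of log cosh becomes y_i + e with y_i = b_N i^-g, b_N -> c_w z / sqrt E[W^2] and e = r N^(g-1),
  while the quadratic term of N G_N is exactly the sum of y_i^2/2. Hence
  N G_N = sum h(y_i) - e sum y_i - R_N with h(y) = y^2/2 - log cosh y = O(y^4). The first sum
  tends to f since the sum of i^-4g converges (tau < 5), the drift term converges since
  sum_{i<=N} i^-g ~ N^(1-g)/(1-g), and the second-order remainder R_N is
  O(N e^2 + |e| sum y_i^2) = O(N^(2g-1) + N^-g), which vanishes (tau > 3).
\<close>

section \<open>Bounds on tanh and log cosh\<close>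

lemma abs_diff_le_by_deriv_bound:
  fixes f f' :: "real \<Rightarrow> real"
  assumes der: "\<And>t. (f has_real_derivative f' t) (at t)"
    and bound: "\<And>t. min a b \<le> t \<Longrightarrow> t \<le> max a b \<Longrightarrow> \<bar>f' t\<bar> \<le> B"
  shows "\<bar>f a - f b\<bar> \<le> B * \<bar>a - b\<bar>"
proof -
  have "\<bar>f u - f v\<bar> \<le> B * \<bar>u - v\<bar>" if "u < v" "{u..v} = {min a b..max a b}" for u v
  proof -
    from MVT2[OF \<open>u < v\<close> der] obtain t where t: "u < t" "t < v" "f v - f u = (v - u) * f' t"
      by blast
    have "\<bar>f' t\<bar> \<le> B" using bound t that by auto
    hence "\<bar>(v - u) * f' t\<bar> \<le> (v - u) * B" using \<open>u < v\<close> by (simp add: abs_mult mult_left_mono)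
    with t \<open>u < v\<close> show ?thesis by (simp add: abs_minus_commute mult.commute)
  qed
  from this[of a b] this[of b a] show ?thesis
    by (cases a b rule: linorder_cases) (auto simp: abs_minus_commute)
qed

lemma tanh_le_self:
  assumes "(0::real) \<le> y" shows "tanh y \<le> y"
proof -
  have "(\<lambda>t. t - tanh t) 0 \<le> (\<lambda>t. t - tanh t) y"
    by (rule DERIV_nonneg_imp_nondecreasing[OF assms]) (auto intro!: exI derivative_eq_intros)
  thus ?thesis by simp
qed

lemma abs_tanh_le: "\<bar>tanh (y::real)\<bar> \<le> \<bar>y\<bar>"
  using tanh_le_self[of "\<bar>y\<bar>"] by simp

lemma self_minus_tanh_le_cube:
  assumes "(0::real) \<le> y" shows "y - tanh y \<le> y ^ 3 / 3"
proof -
  have "(\<lambda>t. t^3/3 - t + tanh t) 0 \<le> (\<lambda>t. t^3/3 - t + tanh t) y"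
  proof (rule DERIV_nonneg_imp_nondecreasing[OF assms])
    fix x :: real
    have "tanh x ^ 2 \<le> x ^ 2" using abs_tanh_le[of x] by (metis abs_ge_zero abs_le_square_iff)
    thus "\<exists>d. ((\<lambda>t. t^3/3 - t + tanh t) has_real_derivative d) (at x) \<and> 0 \<le> d"
      by (intro exI[of _ "x^2 - tanh x ^ 2"]) (auto intro!: derivative_eq_intros simp: power2_eq_square)
  qed
  thus ?thesis by simp
qed

lemma abs_self_minus_tanh_le_cube: "\<bar>(y::real) - tanh y\<bar> \<le> \<bar>y\<bar> ^ 3 / 3"
proof -
  have "\<bar>y - tanh y\<bar> = \<bar>y\<bar> - tanh \<bar>y\<bar>"
    using tanh_le_self[of y] tanh_le_self[of "-y"] by (cases "y \<ge> 0") auto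
  thus ?thesis using self_minus_tanh_le_cube[of "\<bar>y\<bar>"] by simp
qed

lemma abs_self_minus_tanh_le_square: "\<bar>(y::real) - tanh y\<bar> \<le> y\<^sup>2"
proof (cases "\<bar>y\<bar> \<le> 3")
  case True
  have "\<bar>y\<bar> ^ 3 / 3 \<le> \<bar>y\<bar>\<^sup>2 * 1"
    using True by (simp add: power3_eq_cube power2_eq_square mult_left_mono)
  thus ?thesis using abs_self_minus_tanh_le_cube[of y] by simp
next
  case False
  have "\<bar>y - tanh y\<bar> \<le> \<bar>y\<bar> + 1" using tanh_real_bounds[of y] by auto
  also have "\<dots> \<le> \<bar>y\<bar> * \<bar>y\<bar>" using False mult_right_mono[of 3 "\<bar>y\<bar>" "\<bar>y\<bar>"] by auto
  finally show ?thesis by (simp add: power2_eq_square)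
qed

lemma ln_cosh_taylor_bound: "\<bar>ln (cosh ((y::real) + e)) - ln (cosh y) - e * tanh y\<bar> \<le> e\<^sup>2"
proof -
  let ?f = "\<lambda>t. ln (cosh t) - t * tanh y"
  have "\<bar>?f (y + e) - ?f y\<bar> \<le> \<bar>e\<bar> * \<bar>(y + e) - y\<bar>"
  proof (rule abs_diff_le_by_deriv_bound[where f' = "\<lambda>t. tanh t - tanh y"])
    show "(?f has_real_derivative tanh t - tanh y) (at t)" for t
      by (auto intro!: derivative_eq_intros simp: tanh_def)
    fix t assume t: "min (y + e) y \<le> t" "t \<le> max (y + e) y"
    have "\<bar>tanh t - tanh y\<bar> \<le> 1 * \<bar>t - y\<bar>"
    proof (rule abs_diff_le_by_deriv_bound)
      show "(tanh has_real_derivative 1 - tanh s ^ 2) (at s)" for s :: real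
        by (auto intro!: derivative_eq_intros)
      show "\<bar>1 - tanh s ^ 2\<bar> \<le> 1" for s :: real
        using tanh_real_bounds[of s] by (auto simp: abs_square_le_1)
    qed
    thus "\<bar>tanh t - tanh y\<bar> \<le> \<bar>e\<bar>" using t by auto
  qed
  thus ?thesis by (simp add: algebra_simps power2_eq_square)
qed

definition sq_half_minus_ln_cosh :: "real \<Rightarrow> real" where
  "sq_half_minus_ln_cosh y = y\<^sup>2 / 2 - ln (cosh y)"

lemma sq_half_minus_ln_cosh_lipschitz:
  assumes "\<bar>u\<bar> \<le> M" "\<bar>v\<bar> \<le> M"
  shows "\<bar>sq_half_minus_ln_cosh u - sq_half_minus_ln_cosh v\<bar> \<le> M ^ 3 / 3 * \<bar>u - v\<bar>"
proof (rule abs_diff_le_by_deriv_bound)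
  show "(sq_half_minus_ln_cosh has_real_derivative t - tanh t) (at t)" for t
    unfolding sq_half_minus_ln_cosh_def by (auto intro!: derivative_eq_intros simp: tanh_def)
  fix t assume "min u v \<le> t" "t \<le> max u v"
  hence "\<bar>t\<bar> ^ 3 / 3 \<le> M ^ 3 / 3" using assms by (auto intro!: power_mono)
  thus "\<bar>t - tanh t\<bar> \<le> M ^ 3 / 3" using abs_self_minus_tanh_le_cube[of t] by linarith
qed

lemma abs_sq_half_minus_ln_cosh_le: "\<bar>sq_half_minus_ln_cosh y\<bar> \<le> \<bar>y\<bar> ^ 4 / 3"
  using sq_half_minus_ln_cosh_lipschitz[of y "\<bar>y\<bar>" 0]
  by (simp add: sq_half_minus_ln_cosh_def power4_eq_xxxx power3_eq_cube)

section \<open>Power sums\<close>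

lemma real_powr_power:
  fixes x :: real assumes "n \<noteq> 0" shows "(x powr a) ^ n = x powr (real n * a)"
  using assms by (cases "x = 0") (simp_all add: powr_power)

lemma powr_antideriv_step_bounds:
  fixes s x :: real
  assumes s: "0 < s" "s < 1" and x: "0 < x"
  shows "(x + 1) powr (-s) \<le> ((x + 1) powr (1 - s) - x powr (1 - s)) / (1 - s)"
    and "((x + 1) powr (1 - s) - x powr (1 - s)) / (1 - s) \<le> x powr (-s)"
proof -
  have "((\<lambda>t. t powr (1 - s) / (1 - s)) has_real_derivative t powr (-s)) (at t)" if "x \<le> t" for t
    using DERIV_cdivide[OF has_real_derivative_powr[of t "1 - s"], of "1 - s"] that x s by simp
  from MVT2[of x "x + 1", OF _ this] obtain t where t: "x < t" "t < x + 1"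
    "(x + 1) powr (1 - s) / (1 - s) - x powr (1 - s) / (1 - s) = t powr (-s)"
    by auto
  have "(x + 1) powr (-s) \<le> t powr (-s)" "t powr (-s) \<le> x powr (-s)"
    using t x s by (auto intro!: powr_mono2')
  with t show "(x + 1) powr (-s) \<le> ((x + 1) powr (1 - s) - x powr (1 - s)) / (1 - s)"
    and "((x + 1) powr (1 - s) - x powr (1 - s)) / (1 - s) \<le> x powr (-s)"
    by (simp_all add: diff_divide_distrib)
qed

lemma sum_powr_lower_bound:
  fixes s :: real assumes s: "0 < s" "s < 1"
  shows "(real (N + 1) powr (1 - s) - 1) / (1 - s) \<le> (\<Sum>i=1..N. real i powr (-s))"
proof (induction N)
  case (Suc N)
  have "(real (N + 2) powr (1 - s) - real (N + 1) powr (1 - s)) / (1 - s) \<le> real (N + 1) powr (-s)"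
    using powr_antideriv_step_bounds(2)[OF s, of "real (N + 1)"] by (simp add: add.commute)
  with Suc show ?case by (simp add: diff_divide_distrib)
qed simp

lemma sum_powr_upper_bound:
  fixes s :: real assumes s: "0 < s" "s < 1"
  shows "(\<Sum>i=1..N. real i powr (-s)) \<le> 1 + real N powr (1 - s) / (1 - s)"
proof (induction N)
  case (Suc N)
  have "real (N + 1) powr (-s) \<le> (real (N + 1) powr (1 - s) - real N powr (1 - s)) / (1 - s)"
  proof (cases "N = 0")
    case True then show ?thesis using s by simp
  next
    case False then show ?thesis
      using powr_antideriv_step_bounds(1)[OF s, of "real N"] by (simp add: add.commute)
  qed
  with Suc show ?case by (simp add: diff_divide_distrib)
qed simp

lemma tendsto_sum_powr_scaled:
  fixes s :: real assumes s: "0 < s" "s < 1"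
  shows "(\<lambda>N. real N powr (s - 1) * (\<Sum>i=1..N. real i powr (-s))) \<longlonglongrightarrow> 1 / (1 - s)"
proof (rule tendsto_sandwich)
  show "\<forall>\<^sub>F N in sequentially. real N powr (s - 1) * ((real (N + 1) powr (1 - s) - 1) / (1 - s))
          \<le> real N powr (s - 1) * (\<Sum>i=1..N. real i powr (-s))"
    using sum_powr_lower_bound[OF s] by (intro always_eventually allI mult_left_mono) auto
  show "\<forall>\<^sub>F N in sequentially. real N powr (s - 1) * (\<Sum>i=1..N. real i powr (-s))
          \<le> real N powr (s - 1) * (1 + real N powr (1 - s) / (1 - s))"
    using sum_powr_upper_bound[OF s] by (intro always_eventually allI mult_left_mono) auto
  show "(\<lambda>N. real N powr (s - 1) * ((real (N + 1) powr (1 - s) - 1) / (1 - s))) \<longlonglongrightarrow> 1 / (1 - s)"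
    using s by real_asymp (simp add: divide_inverse)
  show "(\<lambda>N. real N powr (s - 1) * (1 + real N powr (1 - s) / (1 - s))) \<longlonglongrightarrow> 1 / (1 - s)"
    using s by real_asymp (simp add: divide_inverse)
qed

section \<open>Pareto moments and the weights\<close>

lemma set_lborel_integral_eq_HK_integral_nonneg:
  fixes f :: "real \<Rightarrow> real"
  assumes f: "(f has_integral I) S" and nonneg: "\<And>x. x \<in> S \<Longrightarrow> 0 \<le> f x"
    and meas: "(\<lambda>x. indicator S x * f x) \<in> borel_measurable borel"
  shows "(\<integral>x\<in>S. f x \<partial>lborel) = I"
proof -
  have "f absolutely_integrable_on S"
    using nonnegative_absolutely_integrable_1[OF has_integral_integrable[OF f] nonneg] .
  moreover have "(\<lambda>x. indicator S x *\<^sub>R f x) \<in> borel_measurable lborel"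
    using meas by (simp add: measurable_lborel2)
  ultimately have "set_integrable lborel S f"
    unfolding set_integrable_def using integrable_completion by blast
  with f show ?thesis
    using set_borel_integral_eq_integral(2) integral_unique by metis
qed

lemma pareto_moment:
  assumes tau: "1 < tau" and k: "k < tau - 1" and cw: "0 < cw"
  shows "(\<integral>w\<in>{cw..}. w powr k * pareto_dens tau cw w \<partial>lborel) = (tau - 1) * cw powr k / (tau - 1 - k)"
proof (rule set_lborel_integral_eq_HK_integral_nonneg)
  have eq: "(tau - 1) * cw powr (tau - 1) * w powr (k - tau) = w powr k * pareto_dens tau cw w"
    if "w \<in> {cw..}" for w
    using powr_add[of w k "-tau"] by (simp add: pareto_dens_def)
  define m where "m = k - tau + 1"
  have m: "m < 0" "cw powr (tau - 1) * cw powr m = cw powr k" "tau - 1 - k = - m"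
    using k by (simp_all add: m_def powr_add[symmetric])
  have "((\<lambda>w. (tau - 1) * cw powr (tau - 1) * w powr (k - tau)) has_integral
          (tau - 1) * cw powr (tau - 1) * (- (cw powr m) / m)) {cw..}"
    unfolding m_def using k cw by (intro has_integral_mult_right has_integral_powr_to_inf) auto
  also have "(tau - 1) * cw powr (tau - 1) * (- (cw powr m) / m) = (tau - 1) * cw powr k / (tau - 1 - k)"
    unfolding m(3) m(2)[symmetric] by (simp add: mult.assoc)
  finally show "((\<lambda>w. w powr k * pareto_dens tau cw w) has_integral
      (tau - 1) * cw powr k / (tau - 1 - k)) {cw..}"
    by (rule has_integral_eq[rotated]) (fact eq)
  show "0 \<le> w powr k * pareto_dens tau cw w" if "w \<in> {cw..}" for w
    using tau by (simp add: pareto_dens_def)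
  show "(\<lambda>w. indicator {cw..} w * (w powr k * pareto_dens tau cw w)) \<in> borel_measurable borel"
    unfolding pareto_dens_def by measurable
qed

lemma EW_eq:
  assumes "2 < tau" "0 < cw" shows "EW tau cw = cw * (tau - 1) / (tau - 2)"
proof -
  have "EW tau cw = (\<integral>w\<in>{cw..}. w powr 1 * pareto_dens tau cw w \<partial>lborel)"
    unfolding EW_def using assms by (intro set_lebesgue_integral_cong) auto
  also have "\<dots> = cw * (tau - 1) / (tau - 2)"
    using pareto_moment[of tau 1 cw] assms by simp
  finally show ?thesis .
qed

lemma EW2_eq:
  assumes "3 < tau" "0 < cw" shows "EW2 tau cw = cw\<^sup>2 * (tau - 1) / (tau - 3)"
proof -
  have "EW2 tau cw = (\<integral>w\<in>{cw..}. w powr 2 * pareto_dens tau cw w \<partial>lborel)"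
    unfolding EW2_def using assms by (intro set_lebesgue_integral_cong) (auto simp: powr_numeral)
  also have "\<dots> = cw\<^sup>2 * (tau - 1) / (tau - 3)"
    using pareto_moment[of tau 2 cw] assms by (simp add: powr_numeral)
  finally show ?thesis .
qed

lemma wt_eq:
  assumes "1 \<le> i"
  shows "wt tau cw N i = cw * real N powr (1 / (tau - 1)) * real i powr (- (1 / (tau - 1)))"
  using assms unfolding wt_def by (simp add: powr_divide powr_minus_divide)

lemma wt_pos: "0 < cw \<Longrightarrow> 1 \<le> N \<Longrightarrow> 1 \<le> i \<Longrightarrow> 0 < wt tau cw N i"
  by (simp add: wt_def)

lemma EWN_pos: "0 < cw \<Longrightarrow> 1 \<le> N \<Longrightarrow> 0 < EWN tau cw N"
  unfolding EWN_def by (intro divide_pos_pos sum_pos wt_pos) auto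

lemma EWN2_pos: "0 < cw \<Longrightarrow> 1 \<le> N \<Longrightarrow> 0 < EWN2 tau cw N"
  unfolding EWN2_def by (intro divide_pos_pos sum_pos zero_less_power wt_pos) auto

lemma EWN2_eq:
  fixes tau :: real
  assumes N: "1 \<le> N"
  defines "g \<equiv> 1 / (tau - 1)"
  shows "EWN2 tau cw N = cw\<^sup>2 * (real N powr (2 * g - 1) * (\<Sum>i=1..N. real i powr (- (2 * g))))"
proof -
  have "EWN2 tau cw N = (\<Sum>i=1..N. cw\<^sup>2 * real N powr (2 * g) * real i powr (- (2 * g))) / real N"
    unfolding EWN2_def g_def by (intro arg_cong2[where f = "(/)"] sum.cong) (auto simp: wt_eq power_mult_distrib real_powr_power)
  also have "\<dots> = cw\<^sup>2 * (real N powr (2 * g) / real N * (\<Sum>i=1..N. real i powr (- (2 * g))))"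
    unfolding sum_distrib_left[symmetric] by (simp add: field_simps)
  finally show ?thesis
    using N by (simp add: powr_diff)
qed

lemma tendsto_EWN2:
  assumes "3 < tau" "0 < cw"
  shows "(\<lambda>N. EWN2 tau cw N) \<longlonglongrightarrow> EW2 tau cw"
proof -
  define g where "g = 1 / (tau - 1)"
  have g: "0 < 2 * g" "2 * g < 1" and EW2: "EW2 tau cw = cw\<^sup>2 * (1 / (1 - 2 * g))"
    using assms EW2_eq[OF assms] by (auto simp: g_def field_simps)
  have "(\<lambda>N. cw\<^sup>2 * (real N powr (2 * g - 1) * (\<Sum>i=1..N. real i powr (- (2 * g))))) \<longlonglongrightarrow> EW2 tau cw"
    unfolding EW2 using tendsto_sum_powr_scaled[OF g] by (intro tendsto_mult_left) simp
  moreover have "\<forall>\<^sub>F N in sequentially.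
      cw\<^sup>2 * (real N powr (2 * g - 1) * (\<Sum>i=1..N. real i powr (- (2 * g)))) = EWN2 tau cw N"
    using eventually_ge_at_top[of 1] by eventually_elim (simp add: EWN2_eq g_def)
  ultimately show ?thesis by (rule Lim_transform_eventually)
qed

lemma alphaN_critical:
  assumes "0 < EWN tau cw N" "0 < EWN2 tau cw N"
  shows "alphaN tau cw N (arsinh (1 / nuN tau cw N)) = 1 / sqrt (EWN2 tau cw N)"
  using assms unfolding alphaN_def nuN_def by (simp add: real_sqrt_divide)

lemma GN_critical_rescaled:
  fixes tau cw z r :: real
  assumes tau: "1 < tau" and cw: "0 < cw" and N: "1 \<le> N"
  defines "g \<equiv> 1 / (tau - 1)" and "b \<equiv> cw * z / sqrt (EWN2 tau cw N)"
  shows "real N * GN tau cw N (arsinh (1 / nuN tau cw N)) ((tau - 2) / (tau - 1)) (z / real N powr g) r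
       = (\<Sum>i=1..N. (b * real i powr (-g))\<^sup>2 / 2 - ln (cosh (b * real i powr (-g) + r * real N powr (g - 1))))"
proof -
  have EWN2: "0 < EWN2 tau cw N" using cw N by (rule EWN2_pos)
  have Ng: "0 < real N powr g" using N by simp
  have arg: "alphaN tau cw N (arsinh (1 / nuN tau cw N)) * wt tau cw N i * (z / real N powr g)
      + r / real N powr ((tau - 2) / (tau - 1)) = b * real i powr (-g) + r * real N powr (g - 1)"
    if "1 \<le> i" for i
  proof -
    have "(tau - 2) / (tau - 1) = - (g - 1)" using tau by (simp add: g_def field_simps)
    moreover have "r / real N powr (- (g - 1)) = r * real N powr (g - 1)"
      unfolding powr_minus by (simp add: divide_inverse)
    ultimately have "r / real N powr ((tau - 2) / (tau - 1)) = r * real N powr (g - 1)"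
      by (simp only:)
    moreover have "alphaN tau cw N (arsinh (1 / nuN tau cw N)) * wt tau cw N i * (z / real N powr g)
        = b * real i powr (-g)"
      using Ng unfolding alphaN_critical[OF EWN_pos[OF cw N] EWN2] wt_eq[OF that] b_def g_def
      by (simp add: field_simps)
    ultimately show ?thesis by simp
  qed
  have quadratic: "real N * (z / real N powr g)\<^sup>2 = (\<Sum>i=1..N. (b * real i powr (-g))\<^sup>2)"
  proof -
    define S where "S = (\<Sum>i=1..N. real i powr (- (2 * g)))"
    have S: "0 < S" unfolding S_def using N by (intro sum_pos) auto
    have "(\<Sum>i=1..N. (b * real i powr (-g))\<^sup>2) = b\<^sup>2 * S"
      unfolding S_def by (simp add: power_mult_distrib real_powr_power sum_distrib_left)
    also have "\<dots> = z\<^sup>2 * real N / real N powr (2 * g)"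
      using EWN2 S cw N unfolding b_def EWN2_eq[OF N, of tau cw, folded g_def, folded S_def]
      by (simp add: power_mult_distrib power_divide powr_diff field_simps)
    also have "\<dots> = real N * (z / real N powr g)\<^sup>2"
      by (simp add: power_divide real_powr_power)
    finally show ?thesis ..
  qed
  have "real N * GN tau cw N (arsinh (1 / nuN tau cw N)) ((tau - 2) / (tau - 1)) (z / real N powr g) r
      = real N * (z / real N powr g)\<^sup>2 / 2 - (\<Sum>i=1..N. ln (cosh
          (alphaN tau cw N (arsinh (1 / nuN tau cw N)) * wt tau cw N i * (z / real N powr g)
           + r / real N powr ((tau - 2) / (tau - 1)))))"
    unfolding GN_def g_def using N by (simp add: right_diff_distrib)
  also have "\<dots> = (\<Sum>i=1..N. (b * real i powr (-g))\<^sup>2) / 2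
      - (\<Sum>i=1..N. ln (cosh (b * real i powr (-g) + r * real N powr (g - 1))))"
    unfolding quadratic using arg by (intro arg_cong2[where f = "(-)"] sum.cong) auto
  finally show ?thesis by (simp add: sum_subtractf sum_divide_distrib)
qed

section \<open>Limits of the rescaled sums\<close>

lemma tendsto_sum_sq_half_minus_ln_cosh:
  fixes b :: "nat \<Rightarrow> real"
  assumes g: "1/4 < g" and b: "b \<longlonglongrightarrow> b0"
  shows "(\<lambda>N. \<Sum>i=1..N. sq_half_minus_ln_cosh (b N * real i powr (-g)))
           \<longlonglongrightarrow> (\<Sum>i. sq_half_minus_ln_cosh (b0 * real (Suc i) powr (-g)))"
proof -
  let ?h = "\<lambda>c i. sq_half_minus_ln_cosh (c * real i powr (-g))"
  have pow4: "(x powr (-g)) ^ 4 = x powr (- (4 * g))" for x :: real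
    using real_powr_power[of 4 x "-g"] by simp
  have summable4: "summable (\<lambda>i. real i powr (- (4 * g)))"
    using g by (subst summable_real_powr_iff) auto
  define Z where "Z = (\<Sum>i. real i powr (- (4 * g)))"
  have "summable (\<lambda>i. real (Suc i) powr (- (4 * g)))"
    using summable4 summable_Suc_iff[of "\<lambda>i. real i powr (- (4 * g))"] by blast
  hence majorant: "summable (\<lambda>i. \<bar>b0\<bar> ^ 4 / 3 * real (Suc i) powr (- (4 * g)))"
    by (rule summable_mult)
  have bound: "norm (?h b0 (Suc i)) \<le> \<bar>b0\<bar> ^ 4 / 3 * real (Suc i) powr (- (4 * g))" for i
    using abs_sq_half_minus_ln_cosh_le[of "b0 * real (Suc i) powr (-g)"]
    by (simp add: abs_mult power_mult_distrib pow4)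
  have "summable (\<lambda>i. ?h b0 (Suc i))"
    using bound by (rule summable_comparison_test'[OF majorant])
  hence limit: "(\<lambda>N. \<Sum>i=1..N. ?h b0 i) \<longlonglongrightarrow> (\<Sum>i. ?h b0 (Suc i))"
    using summable_LIMSEQ by (simp add: sum.atLeast1_atMost_eq)
  define K where "K = \<bar>b0\<bar> + 1"
  have "\<forall>\<^sub>F N in sequentially. \<bar>b N\<bar> \<le> K"
    using tendstoD[OF b, of 1] by (auto simp: K_def dist_real_def elim!: eventually_mono)
  hence "\<forall>\<^sub>F N in sequentially. norm ((\<Sum>i=1..N. ?h (b N) i) - (\<Sum>i=1..N. ?h b0 i))
      \<le> K ^ 3 / 3 * \<bar>b N - b0\<bar> * Z"
  proof eventually_elim
    case (elim N)
    have "\<bar>?h (b N) i - ?h b0 i\<bar> \<le> K ^ 3 / 3 * \<bar>b N - b0\<bar> * real i powr (- (4 * g))" for i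
    proof -
      have "\<bar>?h (b N) i - ?h b0 i\<bar> \<le> (K * real i powr (-g)) ^ 3 / 3 * \<bar>b N - b0\<bar> * real i powr (-g)"
        using sq_half_minus_ln_cosh_lipschitz[of "b N * real i powr (-g)" "K * real i powr (-g)"
            "b0 * real i powr (-g)"] elim
        by (simp add: K_def abs_mult mult_right_mono left_diff_distrib[symmetric] mult.assoc)
      also have "\<dots> = K ^ 3 / 3 * \<bar>b N - b0\<bar> * (real i powr (-g)) ^ 4"
        by (simp add: power_mult_distrib power4_eq_xxxx power3_eq_cube algebra_simps)
      finally show ?thesis by (simp only: pow4)
    qed
    hence "norm ((\<Sum>i=1..N. ?h (b N) i) - (\<Sum>i=1..N. ?h b0 i))
        \<le> K ^ 3 / 3 * \<bar>b N - b0\<bar> * (\<Sum>i=1..N. real i powr (- (4 * g)))"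
      unfolding real_norm_def sum_subtractf[symmetric] sum_distrib_left
      by (intro order_trans[OF sum_abs sum_mono])
    also have "\<dots> \<le> K ^ 3 / 3 * \<bar>b N - b0\<bar> * Z"
      unfolding Z_def K_def by (intro mult_left_mono sum_le_suminf summable4) auto
    finally show ?case .
  qed
  moreover have "(\<lambda>N. K ^ 3 / 3 * \<bar>b N - b0\<bar> * Z) \<longlonglongrightarrow> 0"
    by (auto intro!: tendsto_eq_intros b)
  ultimately have "(\<lambda>N. (\<Sum>i=1..N. ?h (b N) i) - (\<Sum>i=1..N. ?h b0 i)) \<longlonglongrightarrow> 0"
    by (rule Lim_null_comparison)
  from tendsto_add[OF this limit] show ?thesis by simp
qed

lemma abs_sum_ln_cosh_remainder_le:
  "\<bar>\<Sum>i\<in>A. ln (cosh (y i + e)) - ln (cosh (y i)) - e * y i\<bar>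
     \<le> real (card A) * e\<^sup>2 + \<bar>e\<bar> * (\<Sum>i\<in>A. (y i)\<^sup>2)"
proof -
  have "\<bar>ln (cosh (y i + e)) - ln (cosh (y i)) - e * y i\<bar> \<le> e\<^sup>2 + \<bar>e\<bar> * (y i)\<^sup>2" for i
  proof -
    have "\<bar>e * (y i - tanh (y i))\<bar> \<le> \<bar>e\<bar> * (y i)\<^sup>2"
      unfolding abs_mult by (intro mult_left_mono abs_self_minus_tanh_le_square) auto
    with ln_cosh_taylor_bound[of "y i" e] show ?thesis by (simp add: algebra_simps abs_mult)
  qed
  hence "\<bar>\<Sum>i\<in>A. ln (cosh (y i + e)) - ln (cosh (y i)) - e * y i\<bar> \<le> (\<Sum>i\<in>A. e\<^sup>2 + \<bar>e\<bar> * (y i)\<^sup>2)"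
    by (intro order_trans[OF sum_abs sum_mono])
  thus ?thesis by (simp add: sum.distrib sum_distrib_left)
qed

lemma tendsto_sum_ln_cosh_remainder:
  fixes b :: "nat \<Rightarrow> real"
  assumes g: "0 < g" "g < 1/2" and b: "b \<longlonglongrightarrow> b0"
  shows "(\<lambda>N. \<Sum>i=1..N. ln (cosh (b N * real i powr (-g) + r * real N powr (g - 1)))
            - ln (cosh (b N * real i powr (-g))) - r * real N powr (g - 1) * (b N * real i powr (-g)))
           \<longlonglongrightarrow> 0"
proof (rule Lim_null_comparison)
  define S2 where "S2 N = real N powr (2 * g - 1) * (\<Sum>i=1..N. real i powr (- (2 * g)))" for N
  show "\<forall>\<^sub>F N in sequentially. norm (\<Sum>i=1..N. ln (cosh (b N * real i powr (-g) + r * real N powr (g - 1)))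
            - ln (cosh (b N * real i powr (-g))) - r * real N powr (g - 1) * (b N * real i powr (-g)))
      \<le> r\<^sup>2 * real N powr (2 * g - 1) + \<bar>r\<bar> * (b N)\<^sup>2 * real N powr (-g) * S2 N"
    using eventually_ge_at_top[of 1]
  proof eventually_elim
    case (elim N)
    have "real N * (r * real N powr (g - 1))\<^sup>2 = r\<^sup>2 * real N powr (2 * g - 1)"
    proof -
      have "real N powr (1 + (g - 1) + (g - 1)) = real N powr 1 * real N powr (g - 1) * real N powr (g - 1)"
        by (simp only: powr_add)
      moreover have "1 + (g - 1) + (g - 1) = 2 * g - 1" by simp
      ultimately show ?thesis by (simp add: power2_eq_square)
    qed
    moreover have "\<bar>r * real N powr (g - 1)\<bar> * (\<Sum>i=1..N. (b N * real i powr (-g))\<^sup>2)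
        = \<bar>r\<bar> * (b N)\<^sup>2 * real N powr (-g) * S2 N"
    proof -
      have "real N powr (g - 1) = real N powr (-g) * real N powr (2 * g - 1)"
        by (simp add: powr_add[symmetric])
      moreover have "(\<Sum>i=1..N. (b N * real i powr (-g))\<^sup>2) = (b N)\<^sup>2 * (\<Sum>i=1..N. real i powr (- (2 * g)))"
        by (simp add: power_mult_distrib real_powr_power sum_distrib_left)
      ultimately show ?thesis by (simp add: S2_def abs_mult)
    qed
    ultimately show ?case
      using abs_sum_ln_cosh_remainder_le[of "\<lambda>i. b N * real i powr (-g)" "r * real N powr (g - 1)" "{1..N}"]
      by simp
  qed
  have "S2 \<longlonglongrightarrow> 1 / (1 - 2 * g)"
    unfolding S2_def using g by (intro tendsto_sum_powr_scaled) auto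
  hence "(\<lambda>N. r\<^sup>2 * real N powr (2 * g - 1) + \<bar>r\<bar> * (b N)\<^sup>2 * real N powr (-g) * S2 N)
      \<longlonglongrightarrow> r\<^sup>2 * 0 + \<bar>r\<bar> * b0\<^sup>2 * 0 * (1 / (1 - 2 * g))"
    using g by (intro tendsto_intros b tendsto_neg_powr filterlim_real_sequentially) auto
  thus "(\<lambda>N. r\<^sup>2 * real N powr (2 * g - 1) + \<bar>r\<bar> * (b N)\<^sup>2 * real N powr (-g) * S2 N) \<longlonglongrightarrow> 0"
    by simp
qed

lemma tendsto_sum_critical_rescaled:
  fixes b :: "nat \<Rightarrow> real"
  assumes g: "1/4 < g" "g < 1/2" and b: "b \<longlonglongrightarrow> b0"
  shows "(\<lambda>N. \<Sum>i=1..N. (b N * real i powr (-g))\<^sup>2 / 2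
                         - ln (cosh (b N * real i powr (-g) + r * real N powr (g - 1))))
           \<longlonglongrightarrow> (\<Sum>i. sq_half_minus_ln_cosh (b0 * real (Suc i) powr (-g))) - r * b0 / (1 - g)"
proof -
  let ?y = "\<lambda>N i. b N * real i powr (-g)" and ?e = "\<lambda>N. r * real N powr (g - 1)"
  have decomposition: "(\<Sum>i=1..N. (?y N i)\<^sup>2 / 2 - ln (cosh (?y N i + ?e N)))
      = (\<Sum>i=1..N. sq_half_minus_ln_cosh (?y N i))
        - r * b N * (real N powr (g - 1) * (\<Sum>i=1..N. real i powr (-g)))
        - (\<Sum>i=1..N. ln (cosh (?y N i + ?e N)) - ln (cosh (?y N i)) - ?e N * ?y N i)" for N
    by (simp add: sq_half_minus_ln_cosh_def sum_subtractf sum.distrib sum_distrib_left algebra_simps)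
  have "(\<lambda>N. r * b N * (real N powr (g - 1) * (\<Sum>i=1..N. real i powr (-g)))) \<longlonglongrightarrow> r * b0 * (1 / (1 - g))"
    using g by (intro tendsto_intros b tendsto_sum_powr_scaled) auto
  with g b have "(\<lambda>N. (\<Sum>i=1..N. sq_half_minus_ln_cosh (?y N i))
        - r * b N * (real N powr (g - 1) * (\<Sum>i=1..N. real i powr (-g)))
        - (\<Sum>i=1..N. ln (cosh (?y N i + ?e N)) - ln (cosh (?y N i)) - ?e N * ?y N i))
      \<longlonglongrightarrow> (\<Sum>i. sq_half_minus_ln_cosh (b0 * real (Suc i) powr (-g))) - r * b0 * (1 / (1 - g)) - 0"
    by (intro tendsto_diff tendsto_sum_sq_half_minus_ln_cosh tendsto_sum_ln_cosh_remainder) auto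
  thus ?thesis unfolding decomposition by simp
qed

lemma critical_limit_eq:
  fixes tau cw z r :: real
  assumes tau: "3 < tau" and cw: "0 < cw"
  defines "g \<equiv> 1 / (tau - 1)" and "b0 \<equiv> cw * z / sqrt (EW2 tau cw)"
  shows "- z * r * sqrt (EW tau cw / nu tau cw) + ff tau (sqrt (EW tau cw / nu tau cw) * z)
       = (\<Sum>i. sq_half_minus_ln_cosh (b0 * real (Suc i) powr (-g))) - r * b0 / (1 - g)"
proof -
  have g: "(tau - 2) / (tau - 1) = 1 - g" "1 - g \<noteq> 0" using tau by (auto simp: g_def field_simps)
  have EW: "EW tau cw = cw / (1 - g)" and EW2: "0 < EW2 tau cw"
    using EW_eq[of tau cw] EW2_eq[OF tau cw] tau cw g(1)[symmetric] by auto
  have "0 < EW tau cw" using EW g tau cw by (simp add: g_def)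
  with EW2 have "EW tau cw / nu tau cw = (EW tau cw)\<^sup>2 / EW2 tau cw"
    unfolding nu_def by (simp add: field_simps power2_eq_square)
  with \<open>0 < EW tau cw\<close> have sqrt_EW_nu: "sqrt (EW tau cw / nu tau cw) = EW tau cw / sqrt (EW2 tau cw)"
    by (simp add: real_sqrt_divide)
  have "(tau - 2) / (tau - 1) * (sqrt (EW tau cw / nu tau cw) * z) = b0"
    using g(2) EW2 unfolding g(1) sqrt_EW_nu unfolding EW b0_def by (simp add: field_simps)
  moreover have "z * r * sqrt (EW tau cw / nu tau cw) = r * b0 / (1 - g)"
    using g(2) EW2 unfolding sqrt_EW_nu unfolding EW b0_def by (simp add: field_simps)
  ultimately show ?thesis
    unfolding ff_def sq_half_minus_ln_cosh_def g_def by (simp add: Let_def)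
qed

theorem mainTheorem12:
  fixes tau cw z r :: real
  assumes "3 < tau" and "tau < 5" and "0 < cw"
  shows "(\<lambda>N. real N * GN tau cw N (arsinh (1 / nuN tau cw N)) ((tau - 2) / (tau - 1))
                 (z / real N powr (1 / (tau - 1))) r)
         \<longlonglongrightarrow> - z * r * sqrt (EW tau cw / nu tau cw) + ff tau (sqrt (EW tau cw / nu tau cw) * z)"
proof -
  define g where "g = 1 / (tau - 1)"
  have g: "1/4 < g" "g < 1/2" using assms by (auto simp: g_def field_simps)
  have "0 < EW2 tau cw" using assms by (simp add: EW2_eq)
  hence "(\<lambda>N. cw * z / sqrt (EWN2 tau cw N)) \<longlonglongrightarrow> cw * z / sqrt (EW2 tau cw)"
    using assms by (intro tendsto_intros tendsto_EWN2) auto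
  from tendsto_sum_critical_rescaled[OF g this, of r]
  have "(\<lambda>N. real N * GN tau cw N (arsinh (1 / nuN tau cw N)) ((tau - 2) / (tau - 1))
                 (z / real N powr g) r)
         \<longlonglongrightarrow> - z * r * sqrt (EW tau cw / nu tau cw) + ff tau (sqrt (EW tau cw / nu tau cw) * z)"
    unfolding critical_limit_eq[OF assms(1,3), folded g_def]
  proof (rule Lim_transform_eventually)
    show "\<forall>\<^sub>F N in sequentially. (\<Sum>i=1..N. (cw * z / sqrt (EWN2 tau cw N) * real i powr (-g))\<^sup>2 / 2
           - ln (cosh (cw * z / sqrt (EWN2 tau cw N) * real i powr (-g) + r * real N powr (g - 1))))
        = real N * GN tau cw N (arsinh (1 / nuN tau cw N)) ((tau - 2) / (tau - 1)) (z / real N powr g) r"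
      using eventually_ge_at_top[of 1]
      by eventually_elim (use assms in \<open>simp add: GN_critical_rescaled g_def\<close>)
  qed
  thus ?thesis unfolding g_def .
qed

end
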